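(* Let $(\mathcal S,\mathcal A,P,r)$ be any finite MDP (general/multichain) and let $(g^\star,h^\star)$ be a solution of the modified Bellman equations. Let $V^0\in\mathbb R^n$ and let $V^k=\tfrac12 V^{k-1}+\tfrac12 TV^{k-1}$ for $k\ge 1$ (Relaxed Value Iteration with $\lambda_k=1/2$), and for each $k$ let $\pi_k$ be a greedy policy, i.e. $T^{\pi_k}V^k=TV^k$. Let $\mathcal D$ be the set of all deterministic policies and \[\epsilon=\inf_{\pi\in\mathcal D\setminus\{\pi\,:\,\mathcal P^{\pi}g^\star=g^\star\}}\|\mathcal P^{\pi}g^\star-g^\star\|_\infty\in(0,\infty],\] with the convention $\epsilon=+\infty$ if the index set is empty, and let $K=\big(2\|r\|_\infty+4\|V^0\|_\infty+16\|V^0-h^\star\|_\infty+2\|g^\star\|_\infty\big)/\epsilon$. Then for every $k>K$, \[\|g^\star-g^{\pi_k}\|_\infty\le\|TV^k-V^k-g^\star\|_\infty\le\frac{4\|V^0-h^\star\|_\infty}{\sqrt{\varpi\,(k-K)}},\] where $\varpi=3.141592\ldots$ is the circle constant.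
   Context: An MDP $(\mathcal S,\mathcal A,P,r)$ has finite state space $\mathcal S$ with $|\mathcal S|=n$ (functions on $\mathcal S$ are identified with vectors in $\mathbb R^n$), finite action space $\mathcal A$, transition probabilities $P(s'\mid s,a)$ and bounded reward $r:\mathcal S\times\mathcal A\to\mathbb R$, $\|r\|_\infty=\max_{s,a}|r(s,a)|$. A policy $\pi$ assigns to each state a distribution $\pi(\cdot\mid s)$ on $\mathcal A$; $r^\pi(s)=\sum_a\pi(a\mid s)r(s,a)$ and $\mathcal P^\pi(s,s')=\sum_a\pi(a\mid s)P(s'\mid s,a)$. The average reward of $\pi$ is $g^\pi(s)=\liminf_{T\to\infty}\frac1T\mathbb E_\pi[\sum_{t=0}^{T-1}r(s_t,a_t)\mid s_0=s]$ and $g^\star(s)=\max_\pi g^\pi(s)$. The Bellman consistency operator is $T^\pi V=r^\pi+\mathcal P^\pi V$ and the Bellman optimality operator is $(TV)(s)=\max_{a}\{r(s,a)+\sum_{s'}P(s'\mid s,a)V(s')\}$. A pair $(g,h)\in\mathbb R^n\times\mathbb R^n$ solves the modified Bellman equations if $\max_a\sum_{s'}P(s'\mid s,a)g(s')=g(s)$ and $\max_a\{r(s,a)+\sum_{s'}P(s'\mid s,a)h(s')\}=h(s)+g(s)$ for all $s$, and some policy attains both maxima simultaneously; solutions exist and the first component of any solution equals $g^\star$. A policy is deterministic if each $\pi(\cdot\mid s)$ is a point mass. *)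

theory Defs
  imports "HOL-Analysis.Analysis" "HOL-Library.Extended_Real"
begin

definition is_mdp :: "('s::finite \<Rightarrow> 'a::finite \<Rightarrow> 's \<Rightarrow> real) \<Rightarrow> bool" where
  "is_mdp P \<longleftrightarrow> (\<forall>s a s'. P s a s' \<ge> 0) \<and> (\<forall>s a. (\<Sum>s'\<in>UNIV. P s a s') = 1)"

definition is_policy :: "('s::finite \<Rightarrow> 'a::finite \<Rightarrow> real) \<Rightarrow> bool" where
  "is_policy pol \<longleftrightarrow> (\<forall>s a. pol s a \<ge> 0) \<and> (\<forall>s. (\<Sum>a\<in>UNIV. pol s a) = 1)"

definition det_policy :: "('s::finite \<Rightarrow> 'a::finite) \<Rightarrow> 's \<Rightarrow> 'a \<Rightarrow> real" where
  "det_policy d = (\<lambda>s a. if a = d s then 1 else 0)"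

definition r_pol :: "('s::finite \<Rightarrow> 'a::finite \<Rightarrow> real) \<Rightarrow> ('s \<Rightarrow> 'a \<Rightarrow> real) \<Rightarrow> 's \<Rightarrow> real" where
  "r_pol r pol = (\<lambda>s. \<Sum>a\<in>UNIV. pol s a * r s a)"

definition P_pol :: "('s::finite \<Rightarrow> 'a::finite \<Rightarrow> 's \<Rightarrow> real) \<Rightarrow> ('s \<Rightarrow> 'a \<Rightarrow> real) \<Rightarrow> 's \<Rightarrow> 's \<Rightarrow> real" where
  "P_pol P pol = (\<lambda>s s'. \<Sum>a\<in>UNIV. pol s a * P s a s')"

definition P_apply :: "('s::finite \<Rightarrow> 'a::finite \<Rightarrow> 's \<Rightarrow> real) \<Rightarrow> ('s \<Rightarrow> 'a \<Rightarrow> real) \<Rightarrow> ('s \<Rightarrow> real) \<Rightarrow> 's \<Rightarrow> real" where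
  "P_apply P pol V = (\<lambda>s. \<Sum>s'\<in>UNIV. P_pol P pol s s' * V s')"

definition T_pol :: "('s::finite \<Rightarrow> 'a::finite \<Rightarrow> 's \<Rightarrow> real) \<Rightarrow> ('s \<Rightarrow> 'a \<Rightarrow> real) \<Rightarrow> ('s \<Rightarrow> 'a \<Rightarrow> real) \<Rightarrow> ('s \<Rightarrow> real) \<Rightarrow> 's \<Rightarrow> real" where
  "T_pol P r pol V = (\<lambda>s. r_pol r pol s + P_apply P pol V s)"

definition T_opt :: "('s::finite \<Rightarrow> 'a::finite \<Rightarrow> 's \<Rightarrow> real) \<Rightarrow> ('s \<Rightarrow> 'a \<Rightarrow> real) \<Rightarrow> ('s \<Rightarrow> real) \<Rightarrow> 's \<Rightarrow> real" where
  "T_opt P r V = (\<lambda>s. Max (range (\<lambda>a. r s a + (\<Sum>s'\<in>UNIV. P s a s' * V s'))))"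

text \<open>Average reward: E_pol[r(s_t,a_t) | s_0 = s] = ((P^pol)^t r^pol)(s);
  g^pol(s) = liminf_T (1/T) sum_{t<T} of it (taken in ereal, finite since rewards are bounded).\<close>
definition avg_reward :: "('s::finite \<Rightarrow> 'a::finite \<Rightarrow> 's \<Rightarrow> real) \<Rightarrow> ('s \<Rightarrow> 'a \<Rightarrow> real) \<Rightarrow> ('s \<Rightarrow> 'a \<Rightarrow> real) \<Rightarrow> 's \<Rightarrow> real" where
  "avg_reward P r pol = (\<lambda>s. real_of_ereal (liminf (\<lambda>T::nat.
      ereal ((\<Sum>t<T. ((P_apply P pol ^^ t) (r_pol r pol)) s) / real T))))"

definition supnorm :: "('s::finite \<Rightarrow> real) \<Rightarrow> real" where
  "supnorm V = Max (range (\<lambda>s. \<bar>V s\<bar>))"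

definition rnorm :: "('s::finite \<Rightarrow> 'a::finite \<Rightarrow> real) \<Rightarrow> real" where
  "rnorm r = Max (range (\<lambda>(s,a). \<bar>r s a\<bar>))"

definition modified_bellman :: "('s::finite \<Rightarrow> 'a::finite \<Rightarrow> 's \<Rightarrow> real) \<Rightarrow> ('s \<Rightarrow> 'a \<Rightarrow> real) \<Rightarrow> ('s \<Rightarrow> real) \<Rightarrow> ('s \<Rightarrow> real) \<Rightarrow> bool" where
  "modified_bellman P r g h \<longleftrightarrow>
     (\<forall>s. Max (range (\<lambda>a. \<Sum>s'\<in>UNIV. P s a s' * g s')) = g s) \<and>
     (\<forall>s. Max (range (\<lambda>a. r s a + (\<Sum>s'\<in>UNIV. P s a s' * h s'))) = h s + g s) \<and>
     (\<exists>pol. is_policy pol \<and> (\<forall>s. P_apply P pol g s = g s) \<and>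
            (\<forall>s. r_pol r pol s + P_apply P pol h s = h s + g s))"

definition eps_gap :: "('s::finite \<Rightarrow> 'a::finite \<Rightarrow> 's \<Rightarrow> real) \<Rightarrow> ('s \<Rightarrow> real) \<Rightarrow> ereal" where
  "eps_gap P g = Inf ((\<lambda>d. ereal (supnorm (\<lambda>s. P_apply P (det_policy d) g s - g s)))
       ` {d. P_apply P (det_policy d) g \<noteq> g})"

end

theory Submission
  imports Defs
begin

text \<open>Every action whose one-step expectation of \<open>g\<^sup>\<star>\<close> falls short of \<open>g\<^sup>\<star>\<close> by
  the gap \<open>\<delta>\<close> loses about \<open>k\<delta>/2\<close> against an optimal action after \<open>k\<close> relaxed steps, while
  \<open>V\<^sup>k\<close> stays within \<open>\<parallel>V\<^sup>0 - h\<^sup>\<star>\<parallel>\<close> of \<open>h\<^sup>\<star> + k g\<^sup>\<star>/2\<close>. Beyond the threshold \<open>K\<close> these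
  actions are therefore never chosen: greedy policies leave \<open>g\<^sup>\<star>\<close> invariant, which bounds the
  error of their average reward by the Bellman residual, and \<open>T\<close> agrees along the iterates
  with the operator restricted to \<open>g\<^sup>\<star>\<close>-invariant actions. After removing the drift
  \<open>k g\<^sup>\<star>/2\<close> the iteration becomes a Krasnoselskii--Mann iteration with step \<open>1/2\<close> of a
  nonexpansive map with fixed point \<open>h\<^sup>\<star>\<close>, whose residual after \<open>n\<close> steps is at most
  \<open>2\<parallel>x\<^sub>0 - x\<^sup>\<star>\<parallel> binom(2n+1, n)/4\<^sup>n\<close> (Cominetti, Soto and Vaisman); log-convexity of
  \<open>\<Gamma>\<close> bounds the central binomial term by \<open>2/sqrt(\<pi>(n+1))\<close>.\<close>

section \<open>Central binomial coefficients and a random walk\<close>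

lemma fact_odd_Gamma: "fact (2*n+1) * sqrt pi = 2 * 4^n * fact n * Gamma (real n + 3/2)"
proof -
  define p :: real where "p = pochhammer (1/2) (Suc n)"
  have half: "(1/2::real) \<notin> \<int>\<^sub>\<le>\<^sub>0" by auto
  have p: "p * sqrt pi = Gamma (real n + 3/2)"
    using pochhammer_Gamma[OF half, of "Suc n"] by (simp add: p_def Gamma_one_half_real add_ac)
  have "(2 * real n + 2) * fact (2*n+1) = (fact (2 * Suc n) :: real)"
    by (simp add: algebra_simps)
  also have "\<dots> = 2 ^ (2 * Suc n) * p * fact (Suc n)"
    unfolding p_def by (rule fact_double)
  also have "\<dots> = 4 ^ Suc n * p * fact (Suc n)"
    by (simp only: power_mult) simp
  also have "\<dots> = (2 * real n + 2) * (2 * 4^n * p * fact n)"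
    by (simp add: algebra_simps)
  finally have "fact (2*n+1) = 2 * 4^n * p * (fact n :: real)"
    by simp
  then show ?thesis
    by (simp flip: p)
qed

lemma Gamma_half_le_sqrt:
  fixes x :: real
  assumes "x > 0"
  shows "Gamma (x + 1/2) \<le> sqrt (Gamma x * Gamma (x + 1))"
proof -
  have pos: "Gamma x > 0" "Gamma (x + 1) > 0"
    using assms by simp_all
  have "ln (Gamma ((1 - 1/2) *\<^sub>R x + (1/2) *\<^sub>R (x + 1)))
      \<le> (1 - 1/2) * ln (Gamma x) + (1/2) * ln (Gamma (x + 1))"
    using convex_onD[OF log_convex_Gamma_real, of "1/2" x "x + 1"] assms by simp
  also have "(1 - 1/2) *\<^sub>R x + (1/2) *\<^sub>R (x + 1) = x + 1/2"
    by (simp add: field_simps)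
  also have "(1 - 1/2) * ln (Gamma x) + (1/2) * ln (Gamma (x + 1)) = ln (sqrt (Gamma x * Gamma (x + 1)))"
    using pos by (simp add: ln_sqrt ln_mult)
  finally show ?thesis
    using pos assms by simp
qed

lemma central_binomial_le: "real ((2*n+1) choose n) / 4^n \<le> 2 / sqrt (pi * (real n + 1))"
proof -
  let ?c = "sqrt (real n + 1) * fact n"
  have "sqrt pi * (real n + 1) = sqrt (pi * (real n + 1)) * sqrt (real n + 1)"
    by (simp add: real_sqrt_mult mult.assoc)
  then have root: "sqrt pi * fact (Suc n) = sqrt (pi * (real n + 1)) * ?c"
    by (simp add: mult.assoc[symmetric] add.commute)
  have "real ((2*n+1) choose n) / 4^n * (sqrt pi * fact (Suc n)) = fact (2*n+1) * sqrt pi / (fact n * 4^n)"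
    by (simp add: binomial_fact Suc_diff_le field_simps del: fact_Suc)
  also have "\<dots> = 2 * Gamma (real n + 3/2)"
    by (simp only: fact_odd_Gamma) simp
  also have "\<dots> \<le> 2 * sqrt (Gamma (real n + 1) * Gamma (real n + 2))"
    using Gamma_half_le_sqrt[of "real n + 1"] by (simp add: add_ac)
  also have "\<dots> = 2 * sqrt ((fact n)\<^sup>2 * (real n + 1))"
    using Gamma_fact[of n, where 'a=real] Gamma_fact[of "Suc n", where 'a=real]
    by (simp add: add_ac power2_eq_square)
  also have "\<dots> = 2 * ?c"
    by (simp add: real_sqrt_mult)
  finally have "real ((2*n+1) choose n) / 4^n * (sqrt (pi * (real n + 1)) * ?c) \<le> 2 * ?c"
    unfolding root .
  moreover have "?c > 0" "sqrt (pi * (real n + 1)) > 0"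
    by simp_all
  ultimately show ?thesis
    by (simp add: field_simps)
qed

text \<open>The probability that a simple symmetric random walk started at \<open>c\<close> is positive after
  \<open>N\<close> steps; \<open>b\<close> counts the upward steps.\<close>

definition walk_pos :: "nat \<Rightarrow> int \<Rightarrow> real" where
  "walk_pos N c = (\<Sum>b\<le>N. if int N < 2 * int b + c then real (N choose b) else 0) / 2^N"

lemma walk_pos_0: "walk_pos 0 c = (if 0 < c then 1 else 0)"
  by (simp add: walk_pos_def)

lemma walk_pos_Suc: "walk_pos (Suc N) c = (walk_pos N (c + 1) + walk_pos N (c - 1)) / 2"
proof -
  define S where "S M c = (\<Sum>b\<le>M. if int M < 2 * int b + c then real (M choose b) else 0)" for M c
  have "S (Suc N) c = (if int (Suc N) < c then 1 else 0) +
      (\<Sum>b\<le>N. (if int N < 2 * int b + (c + 1) then real (N choose b) else 0)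
              + (if int (Suc N) < 2 * int (Suc b) + c then real (N choose Suc b) else 0))"
    unfolding S_def
    by (simp only: sum.atMost_Suc_shift binomial_Suc_Suc) (auto simp: sum.distrib[symmetric] intro!: sum.cong)
  moreover have "(if int (Suc N) < c then 1 else 0) +
      (\<Sum>b\<le>N. (if int (Suc N) < 2 * int (Suc b) + c then real (N choose Suc b) else 0))
      = (\<Sum>b\<le>Suc N. (if int (Suc N) < 2 * int b + c then real (N choose b) else 0))"
    by (simp only: sum.atMost_Suc_shift[of _ N]) simp
  moreover have "\<dots> = S N (c - 1)"
    unfolding S_def by (subst sum.atMost_Suc) (auto simp: binomial_eq_0 intro!: sum.cong)
  ultimately have "S (Suc N) c = S N (c + 1) + S N (c - 1)"
    unfolding S_def by (simp add: sum.distrib)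
  moreover have "walk_pos M c = S M c / 2^M" for M c
    by (simp add: walk_pos_def S_def)
  ultimately show ?thesis
    by (simp add: add_divide_distrib)
qed

lemma walk_pos_eq_1: "int N < c \<Longrightarrow> walk_pos N c = 1"
  by (induction N arbitrary: c) (auto simp: walk_pos_0 walk_pos_Suc)

lemma walk_pos_reflect: "walk_pos N c + walk_pos N (1 - c) = 1"
proof (induction N arbitrary: c)
  case 0
  then show ?case by (simp add: walk_pos_0)
next
  case (Suc N)
  have "walk_pos N (c + 1) + walk_pos N (- c) = 1" "walk_pos N (c - 1) + walk_pos N (2 - c) = 1"
    using Suc[of "c + 1"] Suc[of "c - 1"] by simp_all
  then show ?case
    by (simp add: walk_pos_Suc diff_diff_eq[symmetric] field_simps)
qed

lemma walk_pos_parity: "odd (int N + c) \<Longrightarrow> walk_pos N c = walk_pos N (c + 1)"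
proof (induction N arbitrary: c)
  case 0
  then show ?case by (auto simp: walk_pos_0)
next
  case (Suc N)
  have "walk_pos N (c + 1) = walk_pos N (c + 1 + 1)" "walk_pos N (c - 1) = walk_pos N (c - 1 + 1)"
    using Suc.prems by (intro Suc.IH; simp)+
  then show ?case
    by (simp add: walk_pos_Suc algebra_simps)
qed

lemma walk_pos_odd_0: "walk_pos (2*n+1) 0 = 1/2"
  using walk_pos_parity[of "2*n+1" 0] walk_pos_reflect[of "2*n+1" 1] by simp

lemma walk_pos_odd_2: "walk_pos (2*n+1) 2 - walk_pos (2*n+1) 1 = real ((2*n+1) choose n) / 2^(2*n+1)"
proof -
  have "(if int (2*n+1) < 2 * int b + 2 then real ((2*n+1) choose b) else 0)
      - (if int (2*n+1) < 2 * int b + 1 then real ((2*n+1) choose b) else 0)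
      = (if b = n then real ((2*n+1) choose b) else 0)" for b
    by auto
  then have "(\<Sum>b\<le>2*n+1. if int (2*n+1) < 2 * int b + 2 then real ((2*n+1) choose b) else 0)
      - (\<Sum>b\<le>2*n+1. if int (2*n+1) < 2 * int b + 1 then real ((2*n+1) choose b) else 0)
      = real ((2*n+1) choose n)"
    by (simp only: sum_subtractf[symmetric]) simp
  then show ?thesis
    unfolding walk_pos_def by (simp only: diff_divide_distrib[symmetric])
qed

text \<open>For \<open>m \<le> n\<close> these bound \<open>\<parallel>x\<^sub>m - x\<^sub>n\<parallel>\<close> and \<open>\<parallel>x\<^sub>m - F x\<^sub>n\<parallel>\<close> along the iteration
  \<open>x\<^sub>i\<^sub>+\<^sub>1 = (x\<^sub>i + F x\<^sub>i)/2\<close>, in units of \<open>2\<parallel>x\<^sub>0 - x\<^sup>\<star>\<parallel>\<close>: both satisfy the recursions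
  \<open>km_xx_Suc\<close> and \<open>km_xF_Suc\<close> that the triangle inequality yields for the true distances.\<close>

definition km_xx :: "nat \<Rightarrow> nat \<Rightarrow> real" where
  "km_xx m n = 2 * walk_pos (m + n + 1) (int n - int m) - 1"

definition km_xF :: "nat \<Rightarrow> nat \<Rightarrow> real" where
  "km_xF m n = 2 * walk_pos (m + n + 1) (int n - int m + 2) - 1"

lemma km_xx_Suc: "km_xx m (Suc n) = (km_xx m n + km_xF m n) / 2"
  using walk_pos_Suc[of "m + n + 1" "int n - int m + 1"]
  by (simp add: km_xx_def km_xF_def algebra_simps)

lemma km_xF_Suc: "km_xF (Suc m) n = (km_xx m n + km_xF m n) / 2"
  using walk_pos_Suc[of "m + n + 1" "int n - int m + 1"]
  by (simp add: km_xx_def km_xF_def algebra_simps)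

lemma km_xF_0: "km_xF 0 n = 1"
  by (simp add: km_xF_def walk_pos_eq_1)

lemma km_xx_diag: "km_xx n n = 0"
  using walk_pos_odd_0[of n] by (simp add: km_xx_def flip: mult_2)

lemma km_xF_diag: "km_xF n n = real ((2*n+1) choose n) / 4^n"
proof -
  have "walk_pos (2*n+1) 1 = 1/2"
    using walk_pos_odd_0[of n] walk_pos_parity[of "2*n+1" 0] by simp
  then have "km_xF n n = 2 * (walk_pos (2*n+1) 2 - walk_pos (2*n+1) 1)"
    by (simp add: km_xF_def flip: mult_2)
  also have "\<dots> = 2 * (real ((2*n+1) choose n) / 2^(2*n+1))"
    by (simp only: walk_pos_odd_2)
  also have "\<dots> = real ((2*n+1) choose n) / 4^n"
    by (simp add: power_add power_mult)
  finally show ?thesis .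
qed

lemma km_xF_diag_le: "km_xF n n \<le> 2 / sqrt (pi * (real n + 1))"
  using central_binomial_le[of n] by (simp add: km_xF_diag)

section \<open>Krasnoselskii--Mann iteration with step 1/2\<close>

lemma abs_le_supnorm: "\<bar>V s\<bar> \<le> supnorm V"
  unfolding supnorm_def by (rule Max_ge) auto

lemma supnorm_leI: "(\<And>s. \<bar>V s\<bar> \<le> c) \<Longrightarrow> supnorm V \<le> c"
  unfolding supnorm_def by (subst Max_le_iff) auto

lemma supnorm_nonneg: "0 \<le> supnorm V"
  using abs_le_supnorm[of V] abs_ge_zero order_trans by blast

lemma abs_midpoint_le:
  fixes a b :: real
  shows "\<bar>a\<bar> \<le> A \<Longrightarrow> \<bar>b\<bar> \<le> B \<Longrightarrow> \<bar>(a + b) / 2\<bar> \<le> (A + B) / 2"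
  by (simp add: abs_le_iff)

locale km_iteration =
  fixes F :: "('s::finite \<Rightarrow> real) \<Rightarrow> 's \<Rightarrow> real"
    and y :: "'s \<Rightarrow> real"
    and x :: "nat \<Rightarrow> 's \<Rightarrow> real"
  assumes nonexpansive: "\<And>U W s. \<bar>F U s - F W s\<bar> \<le> supnorm (\<lambda>s. U s - W s)"
    and fixed_point: "F y = y"
    and step: "\<And>i s. x (Suc i) s = (x i s + F (x i) s) / 2"
begin

lemma dist_fixed_point_le: "\<bar>x i s - y s\<bar> \<le> supnorm (\<lambda>s. x 0 s - y s)"
proof (induction i arbitrary: s)
  case 0
  show ?case by (rule abs_le_supnorm)
next
  case (Suc i)
  have "supnorm (\<lambda>s. x i s - y s) \<le> supnorm (\<lambda>s. x 0 s - y s)"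
    by (rule supnorm_leI) (rule Suc.IH)
  then have "\<bar>F (x i) s - F y s\<bar> \<le> supnorm (\<lambda>s. x 0 s - y s)"
    using nonexpansive[where U = "x i" and W = y and s = s] by linarith
  with Suc.IH[of s] have "\<bar>((x i s - y s) + (F (x i) s - F y s)) / 2\<bar>
      \<le> (supnorm (\<lambda>s. x 0 s - y s) + supnorm (\<lambda>s. x 0 s - y s)) / 2"
    by (intro abs_midpoint_le)
  then show ?case
    by (simp add: step fixed_point diff_divide_distrib add_divide_distrib)
qed

lemma dist_pair_le:
  assumes "m \<le> n"
  shows "\<bar>x m s - x n s\<bar> \<le> 2 * supnorm (\<lambda>s. x 0 s - y s) * km_xx m n
    \<and> \<bar>x m s - F (x n) s\<bar> \<le> 2 * supnorm (\<lambda>s. x 0 s - y s) * km_xF m n"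
  using assms
proof (induction "m + n" arbitrary: m n s rule: less_induct)
  case less
  define R where "R = 2 * supnorm (\<lambda>s. x 0 s - y s)"
  have IH: "\<bar>x m' t - x n' t\<bar> \<le> R * km_xx m' n'" "\<bar>x m' t - F (x n') t\<bar> \<le> R * km_xF m' n'"
    if "m' + n' < m + n" "m' \<le> n'" for m' n' t
    using less.hyps that unfolding R_def by blast+
  have "\<bar>x m s - x n s\<bar> \<le> R * km_xx m n"
  proof (cases "m = n")
    case True
    then show ?thesis by (simp add: km_xx_diag)
  next
    case False
    then obtain n' where n: "n = Suc n'" "m \<le> n'"
      using less.prems by (cases n) auto
    have "\<bar>((x m s - x n' s) + (x m s - F (x n') s)) / 2\<bar> \<le> (R * km_xx m n' + R * km_xF m n') / 2"
      using n by (intro abs_midpoint_le IH) auto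
    then show ?thesis
      by (simp add: n step km_xx_Suc field_simps)
  qed
  moreover have "\<bar>x m s - F (x n) s\<bar> \<le> R * km_xF m n"
  proof (cases m)
    case 0
    have "supnorm (\<lambda>t. y t - x n t) \<le> supnorm (\<lambda>s. x 0 s - y s)"
      using dist_fixed_point_le[of n] by (intro supnorm_leI) (simp add: abs_minus_commute)
    then have "\<bar>F y s - F (x n) s\<bar> \<le> supnorm (\<lambda>s. x 0 s - y s)"
      using nonexpansive[where U = y and W = "x n" and s = s] by linarith
    then show ?thesis
      using dist_fixed_point_le[of 0 s] by (simp add: 0 R_def km_xF_0 fixed_point abs_le_iff)
  next
    case (Suc m')
    then have m': "m' + n < m + n" "m' \<le> n"
      using less.prems by auto
    have "supnorm (\<lambda>t. x m' t - x n t) \<le> R * km_xx m' n"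
      using IH(1)[OF m'] by (rule supnorm_leI)
    then have "\<bar>F (x m') s - F (x n) s\<bar> \<le> R * km_xx m' n"
      using nonexpansive[where U = "x m'" and W = "x n" and s = s] by linarith
    then have "\<bar>((x m' s - F (x n) s) + (F (x m') s - F (x n) s)) / 2\<bar> \<le> (R * km_xF m' n + R * km_xx m' n) / 2"
      by (intro abs_midpoint_le IH(2)[OF m'])
    then show ?thesis
      by (simp add: Suc step km_xF_Suc field_simps)
  qed
  ultimately show ?case
    unfolding R_def by blast
qed

theorem residual_le:
  "supnorm (\<lambda>s. F (x n) s - x n s) \<le> 4 * supnorm (\<lambda>s. x 0 s - y s) / sqrt (pi * (real n + 1))"
proof (rule supnorm_leI)
  fix s
  have "\<bar>F (x n) s - x n s\<bar> \<le> 2 * supnorm (\<lambda>s. x 0 s - y s) * km_xF n n"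
    using dist_pair_le[of n n s] by (simp add: abs_minus_commute)
  also have "\<dots> \<le> 2 * supnorm (\<lambda>s. x 0 s - y s) * (2 / sqrt (pi * (real n + 1)))"
    by (intro mult_left_mono km_xF_diag_le) (simp add: supnorm_nonneg)
  finally show "\<bar>F (x n) s - x n s\<bar> \<le> 4 * supnorm (\<lambda>s. x 0 s - y s) / sqrt (pi * (real n + 1))"
    by simp
qed

end

section \<open>Finite MDPs\<close>

lemma abs_Max_diff_le:
  fixes f g :: "'b \<Rightarrow> real"
  assumes "finite A" "A \<noteq> {}" "\<And>a. a \<in> A \<Longrightarrow> \<bar>f a - g a\<bar> \<le> c"
  shows "\<bar>Max (f ` A) - Max (g ` A)\<bar> \<le> c"
proof -
  have "Max (f ` A) \<in> f ` A" "Max (g ` A) \<in> g ` A"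
    using assms by (intro Max_in; simp)+
  then obtain a1 a2 where a1: "a1 \<in> A" "Max (f ` A) = f a1" and a2: "a2 \<in> A" "Max (g ` A) = g a2"
    by blast
  have "g a1 \<le> Max (g ` A)" "f a2 \<le> Max (f ` A)"
    using assms(1) a1(1) a2(1) by (auto intro!: Max_ge)
  then show ?thesis
    using a1 a2 assms(3)[of a1] assms(3)[of a2] by (auto simp: abs_le_iff)
qed

lemma policy_support_ex:
  assumes "is_policy pol"
  obtains a where "pol s a > 0"
proof -
  have "(\<Sum>a\<in>UNIV. pol s a) = 1" "\<And>a. pol s a \<ge> 0"
    using assms by (auto simp: is_policy_def)
  then show ?thesis
    using that by (metis less_eq_real_def sum.neutral zero_neq_one)
qed

lemma policy_average_eq_max:
  fixes f :: "'a::finite \<Rightarrow> real"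
  assumes "is_policy pol" "\<And>a. f a \<le> M" "(\<Sum>a\<in>UNIV. pol s a * f a) = M" "pol s a > 0"
  shows "f a = M"
proof -
  have pol: "(\<Sum>a\<in>UNIV. pol s a) = 1" "\<And>a. pol s a \<ge> 0"
    using assms(1) by (auto simp: is_policy_def)
  have "(\<Sum>b\<in>UNIV. pol s b * (M - f b)) = 0"
    using assms(3) pol(1) by (simp add: right_diff_distrib sum_subtractf flip: sum_distrib_right)
  then have "pol s a * (M - f a) = 0"
    using pol(2) assms(2) by (subst (asm) sum_nonneg_eq_0_iff) auto
  then show ?thesis
    using assms(4) by simp
qed

lemma P_apply_add: "P_apply P pol (\<lambda>s. f s + g s) = (\<lambda>s. P_apply P pol f s + P_apply P pol g s)"
  by (simp add: P_apply_def distrib_left sum.distrib)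

lemma P_apply_diff: "P_apply P pol (\<lambda>s. f s - g s) = (\<lambda>s. P_apply P pol f s - P_apply P pol g s)"
  by (simp add: P_apply_def right_diff_distrib sum_subtractf)

lemma funpow_P_apply_add:
  "(P_apply P pol ^^ t) (\<lambda>s. f s + g s) = (\<lambda>s. (P_apply P pol ^^ t) f s + (P_apply P pol ^^ t) g s)"
  by (induction t) (simp_all add: P_apply_add)

lemma funpow_P_apply_diff:
  "(P_apply P pol ^^ t) (\<lambda>s. f s - g s) = (\<lambda>s. (P_apply P pol ^^ t) f s - (P_apply P pol ^^ t) g s)"
  by (induction t) (simp_all add: P_apply_diff)

lemma abs_real_liminf_le:
  fixes a :: "nat \<Rightarrow> real"
  assumes "\<And>T. T > 0 \<Longrightarrow> \<bar>a T - x\<bar> \<le> \<delta> + C / real T"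
  shows "\<bar>real_of_ereal (liminf (\<lambda>T. ereal (a T))) - x\<bar> \<le> \<delta>"
proof -
  have "(\<lambda>T. x - \<delta> - C / real T) \<longlonglongrightarrow> x - \<delta> - 0" "(\<lambda>T. x + \<delta> + C / real T) \<longlonglongrightarrow> x + \<delta> + 0"
    by (intro tendsto_diff tendsto_add tendsto_const lim_const_over_n)+
  then have lo: "liminf (\<lambda>T. ereal (x - \<delta> - C / real T)) = ereal (x - \<delta>)"
    and hi: "liminf (\<lambda>T. ereal (x + \<delta> + C / real T)) = ereal (x + \<delta>)"
    by (auto intro!: lim_imp_Liminf)
  have "\<forall>\<^sub>F T in sequentially. x - \<delta> - C / real T \<le> a T \<and> a T \<le> x + \<delta> + C / real T"
    using eventually_gt_at_top[of 0]
  proof eventually_elim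
    case (elim T)
    with assms[of T] show ?case
      by (simp add: abs_le_iff)
  qed
  then have "ereal (x - \<delta>) \<le> liminf (\<lambda>T. ereal (a T))" "liminf (\<lambda>T. ereal (a T)) \<le> ereal (x + \<delta>)"
    unfolding lo[symmetric] hi[symmetric] by (auto intro!: Liminf_mono elim!: eventually_mono)
  then show ?thesis
    by (cases "liminf (\<lambda>T. ereal (a T))") (auto simp: abs_le_iff)
qed

lemma rnorm_nonneg: "0 \<le> rnorm r"
proof -
  have "\<bar>r s a\<bar> \<le> rnorm r" for s a
    unfolding rnorm_def by (rule Max_ge) (auto intro: range_eqI[of _ _ "(s, a)"])
  then show ?thesis
    using abs_ge_zero order_trans by blast
qed

locale mdp =
  fixes P :: "'s::finite \<Rightarrow> 'a::finite \<Rightarrow> 's \<Rightarrow> real"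
    and r :: "'s \<Rightarrow> 'a \<Rightarrow> real"
  assumes is_mdp: "is_mdp P"
begin

definition expect :: "('s \<Rightarrow> real) \<Rightarrow> 's \<Rightarrow> 'a \<Rightarrow> real" where
  "expect V s a = (\<Sum>s'\<in>UNIV. P s a s' * V s')"

definition qval :: "('s \<Rightarrow> real) \<Rightarrow> 's \<Rightarrow> 'a \<Rightarrow> real" where
  "qval V s a = r s a + expect V s a"

lemma abs_expect_le:
  assumes "\<And>s'. \<bar>V s'\<bar> \<le> c"
  shows "\<bar>expect V s a\<bar> \<le> c"
proof -
  have "\<bar>expect V s a\<bar> \<le> (\<Sum>s'\<in>UNIV. P s a s' * \<bar>V s'\<bar>)"
    using is_mdp sum_abs[of "\<lambda>s'. P s a s' * V s'" UNIV]
    by (simp add: expect_def abs_mult is_mdp_def)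
  also have "\<dots> \<le> (\<Sum>s'\<in>UNIV. P s a s' * c)"
    using is_mdp assms by (intro sum_mono mult_left_mono) (auto simp: is_mdp_def)
  also have "\<dots> = c"
    using is_mdp by (simp add: is_mdp_def flip: sum_distrib_right)
  finally show ?thesis .
qed

lemma expect_add_const_mult: "expect (\<lambda>s. V s + c * W s) s a = expect V s a + c * expect W s a"
  by (simp add: expect_def algebra_simps sum.distrib sum_distrib_left)

lemma abs_qval_diff_le:
  assumes "\<And>s'. \<bar>V s' - U s'\<bar> \<le> c"
  shows "\<bar>qval V s a - qval U s a\<bar> \<le> c"
proof -
  have "qval V s a - qval U s a = expect (\<lambda>s. V s - U s) s a"
    by (simp add: qval_def expect_def right_diff_distrib sum_subtractf)
  then show ?thesis
    using abs_expect_le[OF assms] by simp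
qed

lemma T_opt_eq_Max: "T_opt P r V s = Max (range (qval V s))"
  by (simp add: T_opt_def qval_def expect_def)

lemma qval_le_T_opt: "qval V s a \<le> T_opt P r V s"
  unfolding T_opt_eq_Max by (rule Max_ge) auto

lemma T_opt_attained: "\<exists>a. T_opt P r V s = qval V s a"
proof -
  have "Max (range (qval V s)) \<in> range (qval V s)"
    by (rule Max_in) auto
  then show ?thesis
    unfolding T_opt_eq_Max by blast
qed

lemma abs_T_opt_diff_le:
  assumes "\<And>s'. \<bar>V s' - U s'\<bar> \<le> c"
  shows "\<bar>T_opt P r V s - T_opt P r U s\<bar> \<le> c"
  unfolding T_opt_eq_Max by (rule abs_Max_diff_le) (auto intro: abs_qval_diff_le assms)

lemma P_apply_eq: "P_apply P pol V s = (\<Sum>a\<in>UNIV. pol s a * expect V s a)"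
proof -
  have "P_apply P pol V s = (\<Sum>s'\<in>UNIV. \<Sum>a\<in>UNIV. pol s a * P s a s' * V s')"
    by (simp add: P_apply_def P_pol_def sum_distrib_right)
  also have "\<dots> = (\<Sum>a\<in>UNIV. pol s a * expect V s a)"
    by (subst sum.swap) (simp add: expect_def sum_distrib_left mult.assoc)
  finally show ?thesis .
qed

lemma T_pol_eq: "T_pol P r pol V s = (\<Sum>a\<in>UNIV. pol s a * qval V s a)"
  by (simp add: T_pol_def r_pol_def P_apply_eq qval_def sum.distrib distrib_left)

lemma P_apply_det_policy: "P_apply P (det_policy d) V s = expect V s (d s)"
proof -
  have "P_apply P (det_policy d) V s = (\<Sum>a\<in>UNIV. if a = d s then expect V s a else 0)"
    unfolding P_apply_eq det_policy_def by (intro sum.cong) auto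
  then show ?thesis
    by simp
qed

lemma abs_P_apply_le:
  assumes "is_policy pol" "\<And>s. \<bar>f s\<bar> \<le> c"
  shows "\<bar>P_apply P pol f s\<bar> \<le> c"
proof -
  have "\<bar>P_apply P pol f s\<bar> \<le> (\<Sum>a\<in>UNIV. pol s a * \<bar>expect f s a\<bar>)"
    unfolding P_apply_eq using assms(1) sum_abs[of "\<lambda>a. pol s a * expect f s a" UNIV]
    by (simp add: is_policy_def abs_mult)
  also have "\<dots> \<le> (\<Sum>a\<in>UNIV. pol s a * c)"
    using assms by (intro sum_mono mult_left_mono abs_expect_le) (auto simp: is_policy_def)
  also have "\<dots> = c"
    using assms(1) by (simp add: is_policy_def flip: sum_distrib_right)
  finally show ?thesis .
qed

lemma abs_funpow_P_apply_le:
  assumes "is_policy pol" "\<And>s. \<bar>f s\<bar> \<le> c"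
  shows "\<bar>(P_apply P pol ^^ t) f s\<bar> \<le> c"
  using assms(2) by (induction t arbitrary: s) (simp_all add: abs_P_apply_le[OF assms(1)])

lemma cesaro_reward_le:
  assumes pol: "is_policy pol" and fixes_g: "P_apply P pol g = g" and T: "T > 0"
  shows "\<bar>(\<Sum>t<T. (P_apply P pol ^^ t) (r_pol r pol) s) / real T - g s\<bar>
    \<le> supnorm (\<lambda>s. T_pol P r pol V s - V s - g s) + 2 * supnorm V / real T"
proof -
  let ?A = "P_apply P pol"
  define e where "e = (\<lambda>s. T_pol P r pol V s - V s - g s)"
  have V_bound: "\<bar>(?A ^^ T) V s\<bar> \<le> supnorm V"
    by (intro abs_funpow_P_apply_le[OF pol] abs_le_supnorm)
  have "r_pol r pol = (\<lambda>s. (g s + e s) + (V s - ?A V s))"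
    by (simp add: e_def T_pol_def)
  moreover have "(?A ^^ t) g = g" for t
    by (induction t) (simp_all add: fixes_g)
  ultimately have "(?A ^^ t) (r_pol r pol) s = (g s + (?A ^^ t) e s) + ((?A ^^ t) V s - (?A ^^ Suc t) V s)" for t
    by (simp add: funpow_P_apply_add funpow_P_apply_diff funpow_swap1)
  then have "(\<Sum>t<T. (?A ^^ t) (r_pol r pol) s)
      = (\<Sum>t<T. g s + (?A ^^ t) e s) + (\<Sum>t<T. (?A ^^ t) V s - (?A ^^ Suc t) V s)"
    by (simp only: sum.distrib)
  also have "(\<Sum>t<T. (?A ^^ t) V s - (?A ^^ Suc t) V s) = V s - (?A ^^ T) V s"
    using sum_lessThan_telescope'[of "\<lambda>t. (?A ^^ t) V s" T] by simp
  finally have "(\<Sum>t<T. (?A ^^ t) (r_pol r pol) s) - real T * g s = (\<Sum>t<T. (?A ^^ t) e s) + (V s - (?A ^^ T) V s)"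
    by (simp add: sum.distrib)
  moreover have "\<bar>\<Sum>t<T. (?A ^^ t) e s\<bar> \<le> (\<Sum>t<T. supnorm e)"
    by (intro order_trans[OF sum_abs] sum_mono abs_funpow_P_apply_le[OF pol] abs_le_supnorm)
  moreover have "\<bar>V s - (?A ^^ T) V s\<bar> \<le> 2 * supnorm V"
    using abs_le_supnorm[of V s] V_bound by linarith
  ultimately have "\<bar>(\<Sum>t<T. (?A ^^ t) (r_pol r pol) s) - real T * g s\<bar> \<le> real T * supnorm e + 2 * supnorm V"
    by simp
  then show ?thesis
    using T unfolding e_def by (simp add: field_simps)
qed

lemma avg_reward_error_le:
  assumes "is_policy pol" "P_apply P pol g = g"
  shows "supnorm (\<lambda>s. g s - avg_reward P r pol s) \<le> supnorm (\<lambda>s. T_pol P r pol V s - V s - g s)"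
proof (rule supnorm_leI)
  fix s
  have "\<bar>real_of_ereal (liminf (\<lambda>T. ereal ((\<Sum>t<T. (P_apply P pol ^^ t) (r_pol r pol) s) / real T))) - g s\<bar>
      \<le> supnorm (\<lambda>s. T_pol P r pol V s - V s - g s)"
    by (rule abs_real_liminf_le) (rule cesaro_reward_le[OF assms])
  then show "\<bar>g s - avg_reward P r pol s\<bar> \<le> supnorm (\<lambda>s. T_pol P r pol V s - V s - g s)"
    by (simp add: avg_reward_def abs_minus_commute)
qed

end

section \<open>Solutions of the modified Bellman equations\<close>

locale bellman_solution = mdp P r
  for P :: "'s::finite \<Rightarrow> 'a::finite \<Rightarrow> 's \<Rightarrow> real" and r +
  fixes gs hs :: "'s \<Rightarrow> real"
  assumes solves: "modified_bellman P r gs hs"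
begin

definition gap :: "'s \<Rightarrow> 'a \<Rightarrow> real" where
  "gap s a = gs s - expect gs s a"

lemma expect_gs_le: "expect gs s a \<le> gs s"
proof -
  have "expect gs s a \<le> Max (range (\<lambda>a. \<Sum>s'\<in>UNIV. P s a s' * gs s'))"
    unfolding expect_def by (rule Max_ge) auto
  then show ?thesis
    using solves by (simp add: modified_bellman_def)
qed

lemma gap_nonneg: "0 \<le> gap s a"
  using expect_gs_le by (simp add: gap_def)

lemma qval_hs_le: "qval hs s a \<le> hs s + gs s"
proof -
  have "qval hs s a \<le> Max (range (\<lambda>a. r s a + (\<Sum>s'\<in>UNIV. P s a s' * hs s')))"
    unfolding qval_def expect_def by (rule Max_ge) auto
  then show ?thesis
    using solves by (simp add: modified_bellman_def)
qed

lemma optimal_action_ex: "\<exists>a. gap s a = 0 \<and> qval hs s a = hs s + gs s"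
proof -
  obtain pol where pol: "is_policy pol" "\<And>s. P_apply P pol gs s = gs s" "\<And>s. T_pol P r pol hs s = hs s + gs s"
    using solves unfolding modified_bellman_def T_pol_def by blast
  obtain a where a: "pol s a > 0"
    using policy_support_ex[OF pol(1)] .
  have avg: "(\<Sum>a\<in>UNIV. pol s a * (expect gs s a + qval hs s a)) = gs s + (hs s + gs s)"
    using pol(2)[of s] pol(3)[of s]
    by (simp add: P_apply_eq T_pol_eq distrib_left sum.distrib)
  have "expect gs s a + qval hs s a = gs s + (hs s + gs s)"
    by (rule policy_average_eq_max[OF pol(1) _ avg a]) (intro add_mono expect_gs_le qval_hs_le)
  then show ?thesis
    using expect_gs_le[of s a] qval_hs_le[of s a] by (intro exI[of _ a]) (simp add: gap_def)
qed

lemma T_opt_hs_add_gs: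
  assumes "c \<ge> 0"
  shows "T_opt P r (\<lambda>s. hs s + c * gs s) s = hs s + gs s + c * gs s"
proof (rule antisym)
  obtain a where "T_opt P r (\<lambda>s. hs s + c * gs s) s = qval (\<lambda>s. hs s + c * gs s) s a"
    using T_opt_attained by blast
  also have "\<dots> = qval hs s a + c * expect gs s a"
    by (simp add: qval_def expect_add_const_mult)
  also have "\<dots> \<le> hs s + gs s + c * gs s"
    using qval_hs_le[of s a] expect_gs_le[of s a] assms by (simp add: add_mono mult_left_mono)
  finally show "T_opt P r (\<lambda>s. hs s + c * gs s) s \<le> hs s + gs s + c * gs s" .
  obtain a0 where "gap s a0 = 0" "qval hs s a0 = hs s + gs s"
    using optimal_action_ex by blast
  then have "qval (\<lambda>s. hs s + c * gs s) s a0 = hs s + gs s + c * gs s"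
    by (simp add: qval_def expect_add_const_mult gap_def)
  then show "hs s + gs s + c * gs s \<le> T_opt P r (\<lambda>s. hs s + c * gs s) s"
    by (metis qval_le_T_opt)
qed

definition T_gopt :: "('s \<Rightarrow> real) \<Rightarrow> 's \<Rightarrow> real" where
  "T_gopt W s = Max (qval W s ` {a. gap s a = 0})"

lemma gopt_actions_nonempty: "{a. gap s a = 0} \<noteq> {}"
  using optimal_action_ex by blast

lemma abs_T_gopt_diff_le:
  assumes "\<And>s'. \<bar>V s' - U s'\<bar> \<le> c"
  shows "\<bar>T_gopt V s - T_gopt U s\<bar> \<le> c"
  unfolding T_gopt_def
  by (intro abs_Max_diff_le gopt_actions_nonempty abs_qval_diff_le assms) simp

lemma T_gopt_add_gs: "T_gopt (\<lambda>s. W s + c * gs s) s = T_gopt W s + c * gs s"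
proof -
  have "qval (\<lambda>s. W s + c * gs s) s ` {a. gap s a = 0} = (\<lambda>a. qval W s a + c * gs s) ` {a. gap s a = 0}"
    by (rule image_cong[OF refl]) (simp add: qval_def expect_add_const_mult gap_def)
  then show ?thesis
    unfolding T_gopt_def using gopt_actions_nonempty by (simp add: Max_add_commute)
qed

lemma T_gopt_hs: "T_gopt hs s = hs s + gs s"
  unfolding T_gopt_def
proof (rule Max_eqI)
  show "y \<le> hs s + gs s" if "y \<in> qval hs s ` {a. gap s a = 0}" for y
    using that qval_hs_le by auto
  show "hs s + gs s \<in> qval hs s ` {a. gap s a = 0}"
    using optimal_action_ex by force
qed simp

lemma deviation_policy_ex:
  assumes "gap s a \<noteq> 0"
  obtains d where "P_apply P (det_policy d) gs \<noteq> gs"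
    and "supnorm (\<lambda>s. P_apply P (det_policy d) gs s - gs s) = gap s a"
proof -
  define d where "d = (\<lambda>s'. SOME b. gap s' b = 0)(s := a)"
  have "gap s' (SOME b. gap s' b = 0) = 0" for s'
    using optimal_action_ex by (metis (mono_tags) someI_ex)
  then have dev: "P_apply P (det_policy d) gs s' - gs s' = (if s' = s then - gap s a else 0)" for s'
    by (simp add: d_def P_apply_det_policy gap_def)
  show ?thesis
  proof
    show "P_apply P (det_policy d) gs \<noteq> gs"
      using dev[of s] assms by auto
    have "supnorm (\<lambda>s. P_apply P (det_policy d) gs s - gs s) \<le> gap s a"
      using gap_nonneg[of s a] by (intro supnorm_leI) (simp add: dev)
    moreover have "gap s a \<le> supnorm (\<lambda>s. P_apply P (det_policy d) gs s - gs s)"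
      using abs_le_supnorm[of "\<lambda>s. P_apply P (det_policy d) gs s - gs s" s] gap_nonneg[of s a] by (simp add: dev)
    ultimately show "supnorm (\<lambda>s. P_apply P (det_policy d) gs s - gs s) = gap s a"
      by (rule antisym)
  qed
qed

lemma eps_gap_le_gap:
  assumes "gap s a \<noteq> 0"
  shows "eps_gap P gs \<le> ereal (gap s a)"
proof -
  obtain d where "P_apply P (det_policy d) gs \<noteq> gs" "supnorm (\<lambda>s. P_apply P (det_policy d) gs s - gs s) = gap s a"
    using deviation_policy_ex[OF assms] .
  then show ?thesis
    unfolding eps_gap_def by (auto intro!: Inf_lower image_eqI[where x = d])
qed

lemma eps_gap_top:
  assumes "\<And>s a. gap s a = 0"
  shows "eps_gap P gs = \<infinity>"
proof -
  have "P_apply P (det_policy d) gs = gs" for d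
    using assms by (auto simp: P_apply_det_policy gap_def)
  then show ?thesis
    by (simp add: eps_gap_def top_ereal_def)
qed

lemma eps_gap_finite:
  assumes "gap s a \<noteq> 0"
  obtains e where "e > 0" "eps_gap P gs = ereal e"
proof -
  define D where "D = {d. P_apply P (det_policy d) gs \<noteq> gs}"
  let ?norm = "\<lambda>d. ereal (supnorm (\<lambda>s. P_apply P (det_policy d) gs s - gs s))"
  have "D \<noteq> {}"
    using deviation_policy_ex[OF assms] unfolding D_def by blast
  then have "eps_gap P gs \<in> ?norm ` D"
    unfolding eps_gap_def D_def[symmetric] by (simp flip: Min_Inf)
  then obtain d where d: "d \<in> D" "eps_gap P gs = ?norm d"
    by blast
  have "supnorm (\<lambda>s. P_apply P (det_policy d) gs s - gs s) \<noteq> 0"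
  proof
    assume "supnorm (\<lambda>s. P_apply P (det_policy d) gs s - gs s) = 0"
    then have "P_apply P (det_policy d) gs s = gs s" for s
      using abs_le_supnorm[of "\<lambda>s. P_apply P (det_policy d) gs s - gs s" s] by simp
    with d(1) show False
      by (auto simp: D_def)
  qed
  then have "supnorm (\<lambda>s. P_apply P (det_policy d) gs s - gs s) > 0"
    using supnorm_nonneg by (metis less_le)
  with d(2) that show ?thesis
    by blast
qed

lemma eps_gap_threshold:
  assumes "c \<ge> 0"
  obtains \<kappa> where "\<kappa> \<ge> 0" "ereal c / eps_gap P gs = ereal \<kappa>"
    and "\<And>s a. gap s a \<noteq> 0 \<Longrightarrow> c \<le> \<kappa> * gap s a"
proof (cases "\<forall>s a. gap s a = 0")
  case True
  then show ?thesis
    using that[of 0] by (simp add: eps_gap_top)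
next
  case False
  then obtain s0 a0 e where "gap s0 a0 \<noteq> 0" "e > 0" "eps_gap P gs = ereal e"
    using eps_gap_finite by blast
  moreover have "c \<le> c / e * gap s a" if "gap s a \<noteq> 0" for s a
  proof -
    have "e \<le> gap s a"
      using eps_gap_le_gap[OF that] \<open>eps_gap P gs = ereal e\<close> by simp
    then show ?thesis
      using \<open>e > 0\<close> assms by (simp add: field_simps mult_left_mono)
  qed
  ultimately show ?thesis
    using that[of "c / e"] assms by simp
qed

end

section \<open>Relaxed value iteration\<close>

locale relaxed_value_iteration = bellman_solution P r gs hs
  for P :: "'s::finite \<Rightarrow> 'a::finite \<Rightarrow> 's \<Rightarrow> real" and r gs hs +
  fixes V :: "nat \<Rightarrow> 's \<Rightarrow> real"
    and pols :: "nat \<Rightarrow> 's \<Rightarrow> 'a \<Rightarrow> real"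
  assumes V_Suc: "\<And>k. V (Suc k) = (\<lambda>s. (1/2) * V k s + (1/2) * T_opt P r (V k) s)"
    and pols: "\<And>k. is_policy (pols k)"
    and greedy: "\<And>k. T_pol P r (pols k) (V k) = T_opt P r (V k)"
begin

abbreviation d0 :: real where
  "d0 \<equiv> supnorm (\<lambda>s. V 0 s - hs s)"

lemma V_near_affine: "\<bar>V j s - (hs s + real j / 2 * gs s)\<bar> \<le> d0"
proof (induction j arbitrary: s)
  case 0
  show ?case using abs_le_supnorm[of "\<lambda>s. V 0 s - hs s" s] by simp
next
  case (Suc j)
  have T_U: "T_opt P r (\<lambda>s. hs s + real j / 2 * gs s) s = hs s + gs s + real j / 2 * gs s"
    by (rule T_opt_hs_add_gs) simp
  have "\<bar>T_opt P r (V j) s - T_opt P r (\<lambda>s. hs s + real j / 2 * gs s) s\<bar> \<le> d0"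
    by (intro abs_T_opt_diff_le Suc.IH)
  with Suc.IH[of s] have "\<bar>((V j s - (hs s + real j / 2 * gs s))
      + (T_opt P r (V j) s - T_opt P r (\<lambda>s. hs s + real j / 2 * gs s) s)) / 2\<bar> \<le> (d0 + d0) / 2"
    by (intro abs_midpoint_le)
  then show ?case
    unfolding T_U by (simp add: V_Suc field_simps)
qed

lemma qval_nonoptimal_le:
  assumes "gap s a0 = 0" "qval hs s a0 = hs s + gs s"
  shows "qval (V j) s a \<le> qval (V j) s a0 + 2 * d0 - real j / 2 * gap s a"
proof -
  let ?U = "\<lambda>s. hs s + real j / 2 * gs s"
  have near: "\<bar>qval (V j) s b - qval ?U s b\<bar> \<le> d0" for b
    by (intro abs_qval_diff_le V_near_affine)
  have U: "qval ?U s b = qval hs s b + real j / 2 * gs s - real j / 2 * gap s b" for b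
    unfolding qval_def expect_add_const_mult by (simp add: gap_def algebra_simps)
  have "qval (V j) s a \<le> qval hs s a + real j / 2 * gs s - real j / 2 * gap s a + d0"
    using near[of a] unfolding U by (simp add: abs_le_iff)
  moreover have "hs s + gs s + real j / 2 * gs s - d0 \<le> qval (V j) s a0"
    using near[of a0] assms unfolding U by (simp add: abs_le_iff)
  ultimately show ?thesis
    using qval_hs_le[of s a] by linarith
qed

lemma T_opt_eq_T_gopt:
  assumes sep: "\<And>s a. gap s a \<noteq> 0 \<Longrightarrow> 4 * d0 \<le> real j * gap s a"
  shows "T_opt P r (V j) s = T_gopt (V j) s"
proof (rule antisym)
  obtain a0 where a0: "gap s a0 = 0" "qval hs s a0 = hs s + gs s"
    using optimal_action_ex by blast
  have le_T_gopt: "qval (V j) s b \<le> T_gopt (V j) s" if "gap s b = 0" for b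
    unfolding T_gopt_def using that by (intro Max_ge) auto
  obtain a where a: "T_opt P r (V j) s = qval (V j) s a"
    using T_opt_attained by blast
  show "T_opt P r (V j) s \<le> T_gopt (V j) s"
  proof (cases "gap s a = 0")
    case True
    then show ?thesis
      unfolding a by (rule le_T_gopt)
  next
    case False
    then have "qval (V j) s a \<le> qval (V j) s a0"
      using qval_nonoptimal_le[OF a0, of j a] sep[OF False] by linarith
    then show ?thesis
      using a le_T_gopt[OF a0(1)] by linarith
  qed
  have "T_gopt (V j) s \<in> qval (V j) s ` {a. gap s a = 0}"
    unfolding T_gopt_def using gopt_actions_nonempty by (intro Max_in) auto
  then show "T_gopt (V j) s \<le> T_opt P r (V j) s"
    using qval_le_T_opt by auto
qed

lemma greedy_support_optimal:
  assumes sep: "\<And>s a. gap s a \<noteq> 0 \<Longrightarrow> 4 * d0 < real k * gap s a"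
    and "pols k s a > 0"
  shows "gap s a = 0"
proof (rule ccontr)
  assume "gap s a \<noteq> 0"
  obtain a0 where a0: "gap s a0 = 0" "qval hs s a0 = hs s + gs s"
    using optimal_action_ex by blast
  have "(\<Sum>b\<in>UNIV. pols k s b * qval (V k) s b) = T_opt P r (V k) s"
    using fun_cong[OF greedy[of k], of s] by (simp only: T_pol_eq)
  then have "qval (V k) s a = T_opt P r (V k) s"
    by (rule policy_average_eq_max[OF pols qval_le_T_opt _ assms(2)])
  moreover have "qval (V k) s a < qval (V k) s a0"
    using qval_nonoptimal_le[OF a0, of k a] sep[OF \<open>gap s a \<noteq> 0\<close>] by linarith
  moreover have "qval (V k) s a0 \<le> T_opt P r (V k) s"
    by (rule qval_le_T_opt)
  ultimately show False
    by simp
qed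

lemma greedy_fixes_gs:
  assumes "\<And>s a. gap s a \<noteq> 0 \<Longrightarrow> 4 * d0 < real k * gap s a"
  shows "P_apply P (pols k) gs = gs"
proof
  fix s
  have support: "pols k s a * expect gs s a = pols k s a * gs s" for a
  proof -
    have "pols k s a \<ge> 0"
      using pols[of k] by (simp add: is_policy_def)
    then show ?thesis
      using greedy_support_optimal[OF assms, of s a] by (cases "pols k s a = 0") (auto simp: gap_def)
  qed
  have "P_apply P (pols k) gs s = (\<Sum>a\<in>UNIV. pols k s a * gs s)"
    unfolding P_apply_eq by (rule sum.cong) (simp_all add: support)
  also have "\<dots> = gs s"
    using pols[of k] by (simp add: is_policy_def flip: sum_distrib_right)
  finally show "P_apply P (pols k) gs s = gs s" .
qed

lemma residual_rate:
  assumes sep: "\<And>s a. gap s a \<noteq> 0 \<Longrightarrow> 4 * d0 \<le> real m * gap s a" and "m \<le> k"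
  shows "supnorm (\<lambda>s. T_opt P r (V k) s - V k s - gs s) \<le> 4 * d0 / sqrt (pi * (real (k - m) + 1))"
proof -
  txt \<open>Without the drift \<open>(m + i) gs/2\<close> the iterates from \<open>m\<close> on form a Krasnoselskii--Mann
    iteration of \<open>T_gopt - gs\<close>, whose fixed point is \<open>hs\<close>.\<close>
  define W where "W i s = V (m + i) s - real (m + i) / 2 * gs s" for i s
  define F where "F Y s = T_gopt Y s - gs s" for Y s
  have T_V: "T_opt P r (V (m + i)) s = T_gopt (W i) s + real (m + i) / 2 * gs s" for i s
  proof -
    have "4 * d0 \<le> real (m + i) * gap s a" if "gap s a \<noteq> 0" for s a
    proof -
      have "real m * gap s a \<le> real (m + i) * gap s a"
        by (intro mult_right_mono gap_nonneg) simp
      then show ?thesis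
        using sep[OF that] by linarith
    qed
    then have "T_opt P r (V (m + i)) s = T_gopt (V (m + i)) s"
      by (rule T_opt_eq_T_gopt)
    also have "\<dots> = T_gopt (\<lambda>s. W i s + real (m + i) / 2 * gs s) s"
      by (simp add: W_def)
    also have "\<dots> = T_gopt (W i) s + real (m + i) / 2 * gs s"
      by (rule T_gopt_add_gs)
    finally show ?thesis .
  qed
  interpret km_iteration F hs W
  proof
    show "\<bar>F U s - F U' s\<bar> \<le> supnorm (\<lambda>s. U s - U' s)" for U U' s
      unfolding F_def by simp (rule abs_T_gopt_diff_le, rule abs_le_supnorm)
    show "F hs = hs"
      by (simp add: F_def T_gopt_hs fun_eq_iff)
    show "W (Suc i) s = (W i s + F (W i) s) / 2" for i s
      using V_Suc[of "m + i"] T_V[of i s] by (simp add: W_def F_def field_simps)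
  qed
  have residual: "(\<lambda>s. T_opt P r (V k) s - V k s - gs s) = (\<lambda>s. F (W (k - m)) s - W (k - m) s)"
    using \<open>m \<le> k\<close> T_V[of "k - m"] by (simp add: W_def F_def fun_eq_iff field_simps)
  have "supnorm (\<lambda>s. F (W (k - m)) s - W (k - m) s) \<le> 4 * supnorm (\<lambda>s. W 0 s - hs s) / sqrt (pi * (real (k - m) + 1))"
    by (rule residual_le)
  also have "\<dots> \<le> 4 * d0 / sqrt (pi * (real (k - m) + 1))"
    using V_near_affine[of m] by (intro divide_right_mono mult_left_mono supnorm_leI) (simp_all add: W_def algebra_simps)
  finally show ?thesis
    unfolding residual .
qed

theorem error_bounds:
  assumes threshold: "\<And>s a. gap s a \<noteq> 0 \<Longrightarrow> c \<le> \<kappa> * gap s a"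
    and "4 * d0 \<le> c" "0 \<le> \<kappa>" "\<kappa> < real k"
  shows "supnorm (\<lambda>s. gs s - avg_reward P r (pols k) s) \<le> supnorm (\<lambda>s. T_opt P r (V k) s - V k s - gs s)"
    and "supnorm (\<lambda>s. T_opt P r (V k) s - V k s - gs s) \<le> 4 * d0 / sqrt (pi * (real k - \<kappa>))"
proof -
  define m where "m = nat \<lceil>\<kappa>\<rceil>"
  have m: "\<kappa> \<le> real m" "real m < \<kappa> + 1" "m \<le> k"
    using assms(3,4) by (auto simp: m_def nat_le_iff ceiling_le_iff) linarith+
  have "4 * d0 < real k * gap s a" if "gap s a \<noteq> 0" for s a
  proof -
    have "\<kappa> * gap s a < real k * gap s a"
      using that gap_nonneg[of s a] assms(4) by (intro mult_strict_right_mono) auto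
    then show ?thesis
      using threshold[OF that] assms(2) by linarith
  qed
  then have "P_apply P (pols k) gs = gs"
    by (rule greedy_fixes_gs)
  from avg_reward_error_le[OF pols this, of "V k"]
  show "supnorm (\<lambda>s. gs s - avg_reward P r (pols k) s) \<le> supnorm (\<lambda>s. T_opt P r (V k) s - V k s - gs s)"
    by (simp add: greedy)
  have "4 * d0 \<le> real m * gap s a" if "gap s a \<noteq> 0" for s a
    using threshold[OF that] assms(2) mult_right_mono[OF m(1) gap_nonneg[of s a]] by linarith
  then have "supnorm (\<lambda>s. T_opt P r (V k) s - V k s - gs s) \<le> 4 * d0 / sqrt (pi * (real (k - m) + 1))"
    using residual_rate m(3) by blast
  also have "\<dots> \<le> 4 * d0 / sqrt (pi * (real k - \<kappa>))"
    using m assms(4) by (intro divide_left_mono mult_nonneg_nonneg real_sqrt_le_mono mult_left_mono mult_pos_pos)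
      (auto simp: supnorm_nonneg)
  finally show "supnorm (\<lambda>s. T_opt P r (V k) s - V k s - gs s) \<le> 4 * d0 / sqrt (pi * (real k - \<kappa>))" .
qed

end

theorem theorem1:
  fixes P :: "'s::finite \<Rightarrow> 'a::finite \<Rightarrow> 's \<Rightarrow> real"
    and r :: "'s \<Rightarrow> 'a \<Rightarrow> real"
    and gs hs :: "'s \<Rightarrow> real"
    and V :: "nat \<Rightarrow> 's \<Rightarrow> real"
    and pols :: "nat \<Rightarrow> 's \<Rightarrow> 'a \<Rightarrow> real"
    and K :: ereal
  assumes mdp: "is_mdp P"
    and sol: "modified_bellman P r gs hs"
    and V_rec: "\<And>k. V (Suc k) = (\<lambda>s. (1/2) * V k s + (1/2) * T_opt P r (V k) s)"
    and pol: "\<And>k. is_policy (pols k)"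
    and greedy: "\<And>k. T_pol P r (pols k) (V k) = T_opt P r (V k)"
    and K_def: "K = ereal (2 * rnorm r + 4 * supnorm (V 0) + 16 * supnorm (\<lambda>s. V 0 s - hs s)
                       + 2 * supnorm gs) / eps_gap P gs"
  shows "\<forall>k. ereal (real k) > K \<longrightarrow>
     supnorm (\<lambda>s. gs s - avg_reward P r (pols k) s)
       \<le> supnorm (\<lambda>s. T_opt P r (V k) s - V k s - gs s)
   \<and> supnorm (\<lambda>s. T_opt P r (V k) s - V k s - gs s)
       \<le> 4 * supnorm (\<lambda>s. V 0 s - hs s) / sqrt (pi * (real k - real_of_ereal K))"
proof -
  interpret relaxed_value_iteration P r gs hs V pols
    using assms by unfold_locales
  define c where "c = 2 * rnorm r + 4 * supnorm (V 0) + 16 * d0 + 2 * supnorm gs"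
  have "4 * d0 \<le> c" "0 \<le> c"
    using rnorm_nonneg[of r] supnorm_nonneg[of "V 0"] supnorm_nonneg[of gs] supnorm_nonneg[of "\<lambda>s. V 0 s - hs s"]
    by (simp_all add: c_def)
  then obtain \<kappa> where \<kappa>: "0 \<le> \<kappa>" "K = ereal \<kappa>" "\<And>s a. gap s a \<noteq> 0 \<Longrightarrow> c \<le> \<kappa> * gap s a"
    using eps_gap_threshold K_def c_def by metis
  show ?thesis
    unfolding \<kappa>(2) using error_bounds[OF \<kappa>(3) \<open>4 * d0 \<le> c\<close> \<kappa>(1)] by simp
qed

end
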